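(* Consider $n>1$ agents over a time-varying directed graph $\mathbb N(t)=(\mathcal N,\mathcal E(t))$ running the push-sum update $v_i(1)=1$, $v_i(t+1)=l_i(t)v_i(t)+\sum_{j\in\mathcal N_i^{\mathrm{in}}(t)}l_j(t)v_j(t)$, where $l_i(t)=1/(1+o_i(t))$, $o_i(t)$ is the out-degree of $i$ and $\mathcal N_i^{\mathrm{in}}(t)$ its set of in-neighbors at time $t$. Let $\mathcal N_i^+(t)=\mathcal N_i^{\mathrm{in}}(t)\cup\{i\}$ and define the matrix $S(t)$ by $s_{ij}(t)=\frac{l_j(t)v_j(t)}{\sum_{k\in\mathcal N_i^+(t)}l_k(t)v_k(t)}$ for $j\in\mathcal N_i^+(t)$ and $s_{ij}(t)=0$ otherwise. Assume that for every $t$ there is a symmetric stochastic matrix with positive diagonal whose off-diagonal entries vanish outside $\mathcal E(t)$, and that $\{\mathbb N(t)\}$ is repeatedly jointly strongly connected. Then the system $h(t+1)=S(t)h(t)$ is uniformly exponentially consensus stable: there exist a finite constant $\gamma>0$ and $0\le\lambda<1$ such that for any $t_0$ and any $h(t_0)$, $|h(t)|_\infty\le\gamma\lambda^{t-t_0}|h(t_0)|_\infty$ for all $t\ge t_0$.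
   Context: For $x\in\mathbb R^n$, $|x|_\infty=\frac12(\max_i x_i-\min_j x_j)$. Repeatedly jointly strongly connected: there is an integer $r\ge1$ such that for each $k\ge0$ the union of $\mathbb N(rk+1),\dots,\mathbb N(r(k+1))$ (edge sets united) is strongly connected. *)

theory Defs
  imports Main "HOL-Analysis.Analysis"
begin

text \<open>A time-varying graph is
  E :: nat => ('n * 'n) set; an edge (j, i) in E t means j -> i, i.e. j is an
  in-neighbor of i at time t. Self-loops are ignored. Time starts at 1.\<close>

definition in_nbrs :: "(nat \<Rightarrow> ('n \<times> 'n) set) \<Rightarrow> nat \<Rightarrow> 'n \<Rightarrow> 'n set" where
  "in_nbrs E t i = {j. j \<noteq> i \<and> (j, i) \<in> E t}"

definition out_deg :: "(nat \<Rightarrow> ('n \<times> 'n) set) \<Rightarrow> nat \<Rightarrow> 'n \<Rightarrow> nat" where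
  "out_deg E t i = card {j. j \<noteq> i \<and> (i, j) \<in> E t}"

definition lw :: "(nat \<Rightarrow> ('n \<times> 'n) set) \<Rightarrow> nat \<Rightarrow> 'n \<Rightarrow> real" where
  "lw E t i = 1 / (1 + real (out_deg E t i))"

definition in_nbrs_plus :: "(nat \<Rightarrow> ('n \<times> 'n) set) \<Rightarrow> nat \<Rightarrow> 'n \<Rightarrow> 'n set" where
  "in_nbrs_plus E t i = insert i (in_nbrs E t i)"

text \<open>Push-sum weights: v(1) = 1, v(t+1) = l_i(t) v_i(t) + sum over in-neighbors
  of l_j(t) v_j(t), for t >= 1. The value at time 0 is an unused dummy.\<close>
fun pushsum_v :: "(nat \<Rightarrow> ('n \<times> 'n) set) \<Rightarrow> nat \<Rightarrow> 'n \<Rightarrow> real" where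
  "pushsum_v E 0 = (\<lambda>i. 1)"
| "pushsum_v E (Suc t) =
     (if t = 0 then (\<lambda>i. 1)
      else (\<lambda>i. lw E t i * pushsum_v E t i
                + (\<Sum>j\<in>in_nbrs E t i. lw E t j * pushsum_v E t j)))"

definition S_mat :: "(nat \<Rightarrow> ('n \<times> 'n) set) \<Rightarrow> nat \<Rightarrow> 'n \<Rightarrow> 'n \<Rightarrow> real" where
  "S_mat E t i j =
     (if j \<in> in_nbrs_plus E t i
      then lw E t j * pushsum_v E t j / (\<Sum>k\<in>in_nbrs_plus E t i. lw E t k * pushsum_v E t k)
      else 0)"

definition seminorm_inf :: "('n::finite \<Rightarrow> real) \<Rightarrow> real" where
  "seminorm_inf x = (Max (range x) - Min (range x)) / 2"

definition rjsc :: "(nat \<Rightarrow> ('n \<times> 'n) set) \<Rightarrow> bool" where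
  "rjsc E \<longleftrightarrow> (\<exists>r::nat. r \<ge> 1 \<and>
     (\<forall>k. \<forall>i j. (i, j) \<in> (\<Union>t\<in>{r*k+1..r*(k+1)}. E t)\<^sup>*))"

definition sym_stoch_compatible :: "('n::finite \<Rightarrow> 'n \<Rightarrow> real) \<Rightarrow> ('n \<times> 'n) set \<Rightarrow> bool" where
  "sym_stoch_compatible A Et \<longleftrightarrow>
     (\<forall>i j. A i j = A j i) \<and> (\<forall>i j. A i j \<ge> 0) \<and> (\<forall>i. (\<Sum>j\<in>UNIV. A i j) = 1)
     \<and> (\<forall>i. A i i > 0) \<and> (\<forall>i j. i \<noteq> j \<and> (j, i) \<notin> Et \<longrightarrow> A i j = 0)"

end

theory Submission
  imports Defs
begin

text \<open>The push-sum weights keep total mass n, and every agent passes at least the fraction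
  1/(n+1) of its own weight and of the weights of its in-neighbours on to the next step. By
  joint strong connectivity, an agent of weight at least 1 therefore lifts every agent to weight
  at least \<open>\<delta> = (n+1)\<^sup>-\<^sup>N\<close> within \<open>N = r(n+1)\<close> steps, so \<open>v(t) \<ge> \<delta>\<close> for all \<open>t \<ge> 1\<close>. Hence
  S(t) is row stochastic with entries at least \<open>\<eta> = \<delta>/(n(n+1))\<close> on the diagonal and on the
  edges of E(t). Along such a system the maximum of h never increases, and the agent attaining
  the minimum drags every agent at least \<open>\<eta>\<^sup>N (max - min)\<close> below the old maximum within N
  steps; symmetrically for the minimum. So \<open>|h|\<^sub>\<infinity>\<close> contracts by the factor \<open>1 - 2\<eta>\<^sup>N\<close> over
  every N steps, which gives the exponential bound.\<close>

definition windows_strongly_connected :: "(nat \<Rightarrow> ('n \<times> 'n) set) \<Rightarrow> nat \<Rightarrow> bool" where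
  "windows_strongly_connected E r \<longleftrightarrow>
     (\<forall>k i j. (i, j) \<in> (\<Union>t\<in>{r*k+1..r*(k+1)}. E t)\<^sup>*)"

lemma rjsc_iff_windows_strongly_connected:
  "rjsc E \<longleftrightarrow> (\<exists>r\<ge>1. windows_strongly_connected E r)"
  unfolding rjsc_def windows_strongly_connected_def by blast

lemma rtrancl_leaves_set:
  assumes "(a, b) \<in> F\<^sup>*" "a \<in> X" "b \<notin> X"
  shows "\<exists>j i. (j, i) \<in> F \<and> j \<in> X \<and> i \<notin> X"
  using assms by (induction rule: rtrancl_induct) auto

definition propagates :: "(nat \<Rightarrow> ('n \<times> 'n) set) \<Rightarrow> nat \<Rightarrow> (nat \<Rightarrow> 'n \<Rightarrow> bool) \<Rightarrow> bool" where
  "propagates E s P \<longleftrightarrow>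
     (\<forall>u i j. s \<le> u \<longrightarrow> (j = i \<or> (j, i) \<in> E u) \<longrightarrow> P u j \<longrightarrow> P (Suc u) i)"

lemma propagatesD:
  "propagates E s P \<Longrightarrow> s \<le> u \<Longrightarrow> j = i \<or> (j, i) \<in> E u \<Longrightarrow> P u j \<Longrightarrow> P (Suc u) i"
  unfolding propagates_def by blast

lemma propagates_persists:
  assumes closed: "propagates E s P"
    and "s \<le> u" "u \<le> w" "P u i"
  shows "P w i"
  using \<open>u \<le> w\<close> \<open>P u i\<close>
proof (induction w rule: dec_induct)
  case (step w)
  then show ?case using propagatesD[OF closed, of w i i] \<open>s \<le> u\<close> by simp
qed

lemma propagates_spreads_in_window:
  assumes conn: "windows_strongly_connected E r"
    and closed: "propagates E s P"
    and start: "s \<le> r*k + 1"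
    and "P (r*k + 1) a" "\<not> P (r*k + 1) b"
  shows "\<exists>i. \<not> P (r*k + 1) i \<and> P (r*(k+1) + 1) i"
proof -
  have "(a, b) \<in> (\<Union>t\<in>{r*k+1..r*(k+1)}. E t)\<^sup>*"
    using conn unfolding windows_strongly_connected_def by blast
  from rtrancl_leaves_set[OF this, of "{i. P (r*k + 1) i}"] assms(4,5)
  obtain j i t where t: "r*k + 1 \<le> t" "t \<le> r*(k+1)" and ji: "(j, i) \<in> E t"
    and "P (r*k + 1) j" "\<not> P (r*k + 1) i"
    by auto
  moreover have "P t j"
    using propagates_persists[OF closed start t(1)] \<open>P (r*k + 1) j\<close> .
  then have "P (Suc t) i"
    using propagatesD[OF closed _ _ \<open>P t j\<close>] ji start t(1) by simp
  then have "P (r*(k+1) + 1) i"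
    using propagates_persists[OF closed _ _ \<open>P (Suc t) i\<close>] start t by simp
  ultimately show ?thesis by blast
qed

lemma propagates_count_grows:
  fixes E :: "nat \<Rightarrow> ('n::finite \<times> 'n) set"
  assumes conn: "windows_strongly_connected E r"
    and closed: "propagates E s P"
    and start: "s \<le> r*k + 1"
    and "P (r*k + 1) a"
  shows "min (m + 1) CARD('n) \<le> card {i. P (r*(k+m) + 1) i}"
proof (induction m)
  case 0
  then show ?case
    using \<open>P (r*k + 1) a\<close> by (auto simp: card_gt_0_iff Suc_le_eq)
next
  case (Suc m)
  have "s \<le> r*(k+m) + 1"
    using start by (simp add: algebra_simps)
  then have persists: "P (r*(k+m) + 1) i \<Longrightarrow> P (r*(k + Suc m) + 1) i" for i
    using propagates_persists[OF closed] by simp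
  show ?case
  proof (cases "{i. P (r*(k+m) + 1) i} = UNIV")
    case True
    then have "{i. P (r*(k + Suc m) + 1) i} = UNIV"
      using persists by auto
    then show ?thesis by simp
  next
    case False
    then obtain y where "\<not> P (r*(k+m) + 1) y" by auto
    have "{i. P (r*(k+m) + 1) i} \<noteq> {}"
      using Suc.IH by (intro notI) (simp add: min_def split: if_splits)
    then obtain x where "P (r*(k+m) + 1) x" by auto
    then obtain i where "\<not> P (r*(k+m) + 1) i" "P (r*(k + Suc m) + 1) i"
      using propagates_spreads_in_window[OF conn closed \<open>s \<le> r*(k+m) + 1\<close>]
        \<open>\<not> P (r*(k+m) + 1) y\<close> by auto
    then have "insert i {i. P (r*(k+m) + 1) i} \<subseteq> {i. P (r*(k + Suc m) + 1) i}"
      and "card (insert i {i. P (r*(k+m) + 1) i}) = card {i. P (r*(k+m) + 1) i} + 1"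
      using persists by auto
    then have "card {i. P (r*(k+m) + 1) i} + 1 \<le> card {i. P (r*(k + Suc m) + 1) i}"
      by (metis card_mono finite)
    then show ?thesis
      using Suc.IH by linarith
  qed
qed

text \<open>The first full window starts at most r steps after s, and each of the following
  \<open>n - 1\<close> windows adds an agent.\<close>

lemma propagates_reaches_all:
  fixes E :: "nat \<Rightarrow> ('n::finite \<times> 'n) set"
  assumes "1 \<le> r" and conn: "windows_strongly_connected E r"
    and closed: "propagates E s P"
    and "P s a"
  shows "P (s + r * (CARD('n) + 1)) i"
proof -
  define k where "k = s div r + 1"
  have "s mod r < r"
    using \<open>1 \<le> r\<close> by simp
  moreover have "s = r * (s div r) + s mod r"
    by simp
  ultimately have "s \<le> r * (s div r) + r"
    by linarith
  then have start: "s \<le> r*k + 1"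
    unfolding k_def by (simp add: algebra_simps)
  then have "P (r*k + 1) a"
    using propagates_persists[OF closed order_refl _ \<open>P s a\<close>] by simp
  then have "CARD('n) \<le> card {i. P (r*(k + (CARD('n) - 1)) + 1) i}"
    using propagates_count_grows[OF conn closed start, of a "CARD('n) - 1"] by simp
  then have full: "P (r*(k + (CARD('n) - 1)) + 1) i"
    using card_seteq[of UNIV "{i. P (r*(k + (CARD('n) - 1)) + 1) i}"] by auto
  have "r * k \<le> r*(k + (CARD('n) - 1))"
    by (intro mult_le_mono2 le_add1)
  then have "s \<le> r*(k + (CARD('n) - 1)) + 1"
    using start by linarith
  moreover have "r*(k + (CARD('n) - 1)) + 1 \<le> s + r * (CARD('n) + 1)"
  proof -
    have "r*(k + (CARD('n) - 1)) + 1 = r * (s div r) + r * CARD('n) + 1"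
      by (simp add: k_def algebra_simps)
    moreover have "s + r * (CARD('n) + 1) = s + r * CARD('n) + r"
      by (simp add: algebra_simps)
    ultimately show ?thesis
      using \<open>1 \<le> r\<close> times_div_less_eq_dividend[of r s] by linarith
  qed
  ultimately show ?thesis
    using propagates_persists[OF closed _ _ full] by blast
qed

lemma lw_pos: "0 < lw E t i"
  unfolding lw_def by simp

lemma lw_ge: "1 / (1 + real CARD('n)) \<le> lw E t (i::'n::finite)"
proof -
  have "out_deg E t i \<le> CARD('n)"
    unfolding out_deg_def by (simp add: card_mono)
  then show ?thesis
    unfolding lw_def by (simp add: frac_le)
qed

lemma in_nbrs_plus_iff: "j \<in> in_nbrs_plus E t i \<longleftrightarrow> j = i \<or> (j, i) \<in> E t"
  unfolding in_nbrs_plus_def in_nbrs_def by auto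

lemma pushsum_v_Suc:
  assumes "1 \<le> t"
  shows "pushsum_v E (Suc t) (i::'n::finite) = (\<Sum>j\<in>in_nbrs_plus E t i. lw E t j * pushsum_v E t j)"
proof -
  have "i \<notin> in_nbrs E t i"
    unfolding in_nbrs_def by simp
  then show ?thesis
    using assms unfolding in_nbrs_plus_def by simp
qed

lemma pushsum_v_pos: "0 < pushsum_v E t (i::'n::finite)"
proof (induction t arbitrary: i)
  case (Suc t)
  have "0 < lw E t i * pushsum_v E t i"
    using Suc.IH lw_pos by (intro mult_pos_pos)
  moreover have "0 \<le> (\<Sum>j\<in>in_nbrs E t i. lw E t j * pushsum_v E t j)"
    by (intro sum_nonneg mult_nonneg_nonneg less_imp_le lw_pos Suc.IH)
  ultimately show ?case by simp
qed simp

lemma lw_pushsum_v_pos: "0 < lw E t j * pushsum_v E t (j::'n::finite)"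
  by (intro mult_pos_pos lw_pos pushsum_v_pos)

lemma card_out_nbrs_plus: "card {i. j \<in> in_nbrs_plus E t i} = 1 + out_deg E t (j::'n::finite)"
proof -
  have "{i. j \<in> in_nbrs_plus E t i} = insert j {i. i \<noteq> j \<and> (j, i) \<in> E t}"
    unfolding in_nbrs_plus_iff by auto
  then show ?thesis
    unfolding out_deg_def by simp
qed

text \<open>Agent j sends the share \<open>lw E t j\<close> of its weight to itself and to each of its
  \<open>out_deg E t j\<close> out-neighbours, so the total weight is conserved.\<close>

lemma sum_pushsum_v: "(\<Sum>i\<in>UNIV. pushsum_v E t (i::'n::finite)) = real CARD('n)"
proof (induction t)
  case (Suc t)
  show ?case
  proof (cases "t = 0")
    case False
    then have "1 \<le> t" by simp
    define f where "f j = lw E t j * pushsum_v E t j" for j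
    have "(\<Sum>i\<in>UNIV. pushsum_v E (Suc t) i)
        = (\<Sum>i\<in>UNIV. \<Sum>j\<in>UNIV. if j \<in> in_nbrs_plus E t i then f j else 0)"
      unfolding pushsum_v_Suc[OF \<open>1 \<le> t\<close>] f_def by (simp add: sum.If_cases)
    also have "\<dots> = (\<Sum>j\<in>UNIV. \<Sum>i\<in>UNIV. if j \<in> in_nbrs_plus E t i then f j else 0)"
      by (rule sum.swap)
    also have "\<dots> = (\<Sum>j\<in>UNIV. card {i. j \<in> in_nbrs_plus E t i} * f j)"
      by (simp add: sum.If_cases)
    also have "\<dots> = (\<Sum>j\<in>UNIV. pushsum_v E t j)"
      unfolding card_out_nbrs_plus f_def lw_def by simp
    finally show ?thesis
      using Suc.IH by simp
  qed simp
qed simp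

lemma pushsum_v_le_card: "pushsum_v E t (i::'n::finite) \<le> real CARD('n)"
proof -
  have "pushsum_v E t i \<le> (\<Sum>i\<in>UNIV. pushsum_v E t i)"
    by (rule member_le_sum) (auto intro: less_imp_le pushsum_v_pos)
  then show ?thesis
    by (simp add: sum_pushsum_v)
qed

lemma pushsum_v_ge_1_somewhere: "\<exists>j. 1 \<le> pushsum_v E t (j::'n::finite)"
proof (rule ccontr)
  assume "\<nexists>j. 1 \<le> pushsum_v E t j"
  then have "(\<Sum>j\<in>UNIV. pushsum_v E t j) < (\<Sum>j\<in>(UNIV::'n set). 1)"
    by (intro sum_strict_mono) (auto simp: not_le)
  then show False
    by (simp add: sum_pushsum_v)
qed

lemma pushsum_v_share_ge:
  "pushsum_v E t j / (1 + real CARD('n)) \<le> lw E t j * pushsum_v E t (j::'n::finite)"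
  using mult_right_mono[OF lw_ge less_imp_le[OF pushsum_v_pos]] by simp

lemma pushsum_v_Suc_ge:
  assumes "1 \<le> t" "j \<in> in_nbrs_plus E t (i::'n::finite)"
  shows "pushsum_v E t j / (1 + real CARD('n)) \<le> pushsum_v E (Suc t) i"
proof -
  have "pushsum_v E t j / (1 + real CARD('n)) \<le> lw E t j * pushsum_v E t j"
    by (rule pushsum_v_share_ge)
  also have "\<dots> \<le> pushsum_v E (Suc t) i"
    unfolding pushsum_v_Suc[OF assms(1)]
    using assms(2) lw_pushsum_v_pos by (intro member_le_sum) (auto intro: less_imp_le)
  finally show ?thesis .
qed

lemma propagates_pushsum_v_lower:
  fixes E :: "nat \<Rightarrow> ('n::finite \<times> 'n) set"
  assumes "1 \<le> s"
  shows "propagates E s (\<lambda>u i. (1 / (1 + real CARD('n))) ^ (u - s) \<le> pushsum_v E u i)"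
  unfolding propagates_def
proof (intro allI impI)
  fix u i j
  assume "s \<le> u" "j = i \<or> (j, i) \<in> E u"
    and "(1 / (1 + real CARD('n))) ^ (u - s) \<le> pushsum_v E u j"
  then have "(1 / (1 + real CARD('n))) ^ (u - s) / (1 + real CARD('n)) \<le> pushsum_v E (Suc u) i"
    using pushsum_v_Suc_ge[where t = u and j = j and i = i] assms
    by (auto simp: in_nbrs_plus_iff intro: order_trans[OF divide_right_mono])
  then show "(1 / (1 + real CARD('n))) ^ (Suc u - s) \<le> pushsum_v E (Suc u) i"
    using \<open>s \<le> u\<close> by (simp add: Suc_diff_le)
qed

text \<open>For \<open>t \<le> N + 1\<close> the bound follows from \<open>v(1) = 1\<close> along self-loops; later, from an
  agent of weight at least 1 at time \<open>t - N\<close>.\<close>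

lemma pushsum_v_lower_bound:
  fixes E :: "nat \<Rightarrow> ('n::finite \<times> 'n) set"
  assumes "1 \<le> r" "windows_strongly_connected E r" "1 \<le> t"
  shows "(1 / (1 + real CARD('n))) ^ (r * (CARD('n) + 1)) \<le> pushsum_v E t i"
proof -
  define q where "q = 1 / (1 + real CARD('n))"
  define N where "N = r * (CARD('n) + 1)"
  have q: "0 \<le> q" "q \<le> 1"
    unfolding q_def by auto
  show ?thesis
  proof (cases "t \<le> N + 1")
    case True
    have "q ^ (t - 1) \<le> pushsum_v E t i"
      using propagates_persists[OF propagates_pushsum_v_lower[where E = E, OF order_refl], of 1 t i]
        \<open>1 \<le> t\<close>
      by (simp add: q_def)
    moreover have "q ^ N \<le> q ^ (t - 1)"
      using True q by (intro power_decreasing) auto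
    ultimately show ?thesis
      unfolding q_def N_def by linarith
  next
    case False
    then have "1 \<le> t - N" and t: "t = (t - N) + N" by auto
    obtain j0 where "1 \<le> pushsum_v E (t - N) j0"
      using pushsum_v_ge_1_somewhere by blast
    with propagates_reaches_all[OF assms(1,2) propagates_pushsum_v_lower[OF \<open>1 \<le> t - N\<close>],
        where a = j0 and i = i]
    show ?thesis
      using t unfolding N_def by simp
  qed
qed

lemma S_mat_eq:
  assumes "1 \<le> t"
  shows "S_mat E t i (j::'n::finite) =
    (if j \<in> in_nbrs_plus E t i then lw E t j * pushsum_v E t j / pushsum_v E (Suc t) i else 0)"
  unfolding S_mat_def pushsum_v_Suc[OF assms] ..

lemma S_mat_nonneg: "1 \<le> t \<Longrightarrow> 0 \<le> S_mat E t i (j::'n::finite)"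
  using lw_pushsum_v_pos[of E t j] pushsum_v_pos[of E "Suc t" i] by (simp add: S_mat_eq)

lemma sum_S_mat:
  assumes "1 \<le> t"
  shows "(\<Sum>j\<in>UNIV. S_mat E t i (j::'n::finite)) = 1"
proof -
  have "(\<Sum>j\<in>UNIV. S_mat E t i j)
      = (\<Sum>j\<in>in_nbrs_plus E t i. lw E t j * pushsum_v E t j) / pushsum_v E (Suc t) i"
    unfolding S_mat_eq[OF assms] by (simp add: sum.If_cases sum_divide_distrib)
  also have "\<dots> = 1"
    using pushsum_v_pos[of E "Suc t" i]
    by (simp add: pushsum_v_Suc[OF assms, symmetric] del: pushsum_v.simps)
  finally show ?thesis .
qed

lemma S_mat_ge:
  assumes "1 \<le> t" "j \<in> in_nbrs_plus E t i" "\<delta> \<le> pushsum_v E t (j::'n::finite)"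
  shows "\<delta> / ((1 + real CARD('n)) * real CARD('n)) \<le> S_mat E t i j"
proof -
  have "\<delta> / (1 + real CARD('n)) \<le> pushsum_v E t j / (1 + real CARD('n))"
    using assms(3) by (simp add: divide_right_mono)
  also have "\<dots> \<le> lw E t j * pushsum_v E t j"
    by (rule pushsum_v_share_ge)
  finally have "\<delta> / (1 + real CARD('n)) / real CARD('n)
      \<le> lw E t j * pushsum_v E t j / pushsum_v E (Suc t) i"
    using lw_pushsum_v_pos[of E t j] pushsum_v_pos[of E "Suc t" i] pushsum_v_le_card[of E "Suc t" i]
    by (intro frac_le) auto
  then show ?thesis
    using assms(2) by (simp add: S_mat_eq[OF assms(1)])
qed

lemma convex_comb_le:
  fixes w x :: "'n::finite \<Rightarrow> real"
  assumes "\<And>j. 0 \<le> w j" "(\<Sum>j\<in>UNIV. w j) = 1" "\<And>j. x j \<le> M"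
    and "\<eta> \<le> w k" "x k \<le> M - c" "0 \<le> \<eta>" "0 \<le> c"
  shows "(\<Sum>j\<in>UNIV. w j * x j) \<le> M - \<eta> * c"
proof -
  have "(\<Sum>j\<in>UNIV. w j * (M - x j)) = (\<Sum>j\<in>UNIV. w j) * M - (\<Sum>j\<in>UNIV. w j * x j)"
    by (simp add: right_diff_distrib sum_subtractf sum_distrib_right)
  then have "(\<Sum>j\<in>UNIV. w j * (M - x j)) = M - (\<Sum>j\<in>UNIV. w j * x j)"
    using assms(2) by simp
  moreover have "\<eta> * c \<le> w k * (M - x k)"
    using assms by (intro mult_mono) auto
  moreover have "w k * (M - x k) \<le> (\<Sum>j\<in>UNIV. w j * (M - x j))"
    using assms(1,3) by (intro member_le_sum) auto
  ultimately show ?thesis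
    by linarith
qed

lemma Max_range_uminus: "Max (range (\<lambda>i. - x i)) = - Min (range (x::'n::finite \<Rightarrow> real))"
  by (simp add: image_image)

lemma Min_range_uminus: "Min (range (\<lambda>i. - x i)) = - Max (range (x::'n::finite \<Rightarrow> real))"
  by (simp add: image_image)

(* argo instead of linarith here and below: the simp rules minus_Min_eq_Max and
   minus_Max_eq_Min would turn negated extrema into extrema of images under uminus. *)
lemma seminorm_inf_uminus: "seminorm_inf (\<lambda>i. - x i) = seminorm_inf x"
  unfolding seminorm_inf_def Max_range_uminus Min_range_uminus by argo

lemma seminorm_inf_nonneg: "0 \<le> seminorm_inf x"
  unfolding seminorm_inf_def by (simp add: Min_le_iff)

locale row_stochastic_flow =
  fixes S :: "nat \<Rightarrow> 'n::finite \<Rightarrow> 'n \<Rightarrow> real" and h :: "nat \<Rightarrow> 'n \<Rightarrow> real" and s :: nat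
  assumes S_nonneg: "\<And>t i j. s \<le> t \<Longrightarrow> 0 \<le> S t i j"
    and S_row_sum: "\<And>t i. s \<le> t \<Longrightarrow> (\<Sum>j\<in>UNIV. S t i j) = 1"
    and flow: "\<And>t i. s \<le> t \<Longrightarrow> h (Suc t) i = (\<Sum>j\<in>UNIV. S t i j * h t j)"
begin

lemma start_later: "s \<le> s' \<Longrightarrow> row_stochastic_flow S h s'"
  by unfold_locales (simp_all add: S_nonneg S_row_sum flow)

lemma uminus: "row_stochastic_flow S (\<lambda>t i. - h t i) s"
  by unfold_locales (simp_all add: S_nonneg S_row_sum flow sum_negf)

lemma le_Max_initial: "s \<le> u \<Longrightarrow> h u i \<le> Max (range (h s))"
proof (induction u arbitrary: i rule: dec_induct)
  case (step u)
  have "(\<Sum>j\<in>UNIV. S u i j * h u j) \<le> Max (range (h s)) - 0 * 0"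
    by (rule convex_comb_le[where k = i]) (use step S_nonneg S_row_sum in auto)
  then show ?case
    using flow[OF step(1)] by simp
qed simp

lemma Min_initial_le:
  assumes "s \<le> u"
  shows "Min (range (h s)) \<le> h u i"
proof -
  interpret neg: row_stochastic_flow S "\<lambda>t i. - h t i" s
    by (rule uminus)
  show ?thesis
    using neg.le_Max_initial[OF assms, of i] unfolding Max_range_uminus by argo
qed

lemma seminorm_inf_antimono: "s \<le> u \<Longrightarrow> seminorm_inf (h u) \<le> seminorm_inf (h s)"
  unfolding seminorm_inf_def
  by (intro divide_right_mono diff_mono) (simp_all add: Max_le_iff Min_ge_iff le_Max_initial Min_initial_le)

lemma Max_after_window:
  fixes E :: "nat \<Rightarrow> ('n \<times> 'n) set"
  assumes "1 \<le> r" "windows_strongly_connected E r"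
    and S_ge: "\<And>t i j. s \<le> t \<Longrightarrow> j = i \<or> (j, i) \<in> E t \<Longrightarrow> \<eta> \<le> S t i j" and "0 \<le> \<eta>"
  shows "Max (range (h (s + r * (CARD('n) + 1))))
    \<le> Max (range (h s)) - 2 * \<eta> ^ (r * (CARD('n) + 1)) * seminorm_inf (h s)"
proof -
  define M where "M = Max (range (h s))"
  define d where "d = 2 * seminorm_inf (h s)"
  have "0 \<le> d"
    unfolding d_def using seminorm_inf_nonneg by simp
  have closed: "propagates E s (\<lambda>u i. h u i \<le> M - \<eta> ^ (u - s) * d)"
    unfolding propagates_def
  proof (intro allI impI)
    fix u i j
    assume "s \<le> u" "j = i \<or> (j, i) \<in> E u" "h u j \<le> M - \<eta> ^ (u - s) * d"
    then have "(\<Sum>k\<in>UNIV. S u i k * h u k) \<le> M - \<eta> * (\<eta> ^ (u - s) * d)"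
      using \<open>0 \<le> \<eta>\<close> \<open>0 \<le> d\<close>
      by (intro convex_comb_le[where k = j]) (auto simp: M_def S_nonneg S_row_sum S_ge le_Max_initial)
    then show "h (Suc u) i \<le> M - \<eta> ^ (Suc u - s) * d"
      using \<open>s \<le> u\<close> by (simp add: flow Suc_diff_le mult.assoc)
  qed
  have "Min (range (h s)) \<in> range (h s)"
    by (rule Min_in) auto
  then obtain a where "h s a = Min (range (h s))"
    by (metis imageE)
  then have "h s a \<le> M - \<eta> ^ (s - s) * d"
    unfolding M_def d_def seminorm_inf_def diff_self_eq_0 power_0 by argo
  then have "h (s + r * (CARD('n) + 1)) i \<le> M - \<eta> ^ (r * (CARD('n) + 1)) * d" for i
    using propagates_reaches_all[OF assms(1,2) closed, where a = a and i = i] by simp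
  then show ?thesis
    unfolding M_def d_def by (simp add: Max_le_iff mult_ac)
qed

lemma seminorm_inf_window_contraction:
  fixes E :: "nat \<Rightarrow> ('n \<times> 'n) set"
  assumes "1 \<le> r" "windows_strongly_connected E r"
    and "\<And>t i j. s \<le> t \<Longrightarrow> j = i \<or> (j, i) \<in> E t \<Longrightarrow> \<eta> \<le> S t i j" and "0 \<le> \<eta>"
  shows "seminorm_inf (h (s + r * (CARD('n) + 1)))
    \<le> (1 - 2 * \<eta> ^ (r * (CARD('n) + 1))) * seminorm_inf (h s)"
proof -
  interpret neg: row_stochastic_flow S "\<lambda>t i. - h t i" s
    by (rule uminus)
  define N where "N = r * (CARD('n) + 1)"
  have "Max (range (h (s + N))) \<le> Max (range (h s)) - 2 * \<eta> ^ N * seminorm_inf (h s)"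
    unfolding N_def by (rule Max_after_window[OF assms])
  moreover have "- Min (range (h (s + N))) \<le> - Min (range (h s)) - 2 * \<eta> ^ N * seminorm_inf (h s)"
    using neg.Max_after_window[OF assms] unfolding N_def Max_range_uminus seminorm_inf_uminus .
  moreover have "seminorm_inf (h u) = (Max (range (h u)) - Min (range (h u))) / 2" for u
    unfolding seminorm_inf_def ..
  note this[of s] this[of "s + N"]
  ultimately have "seminorm_inf (h (s + N)) \<le> seminorm_inf (h s) - 2 * \<eta> ^ N * seminorm_inf (h s)"
    by argo
  then show ?thesis
    unfolding N_def by (simp add: algebra_simps)
qed

end

lemma exponential_decay_of_periodic_contraction:
  fixes f :: "nat \<Rightarrow> real"
  assumes "0 < c" "c < 1" "1 \<le> N" "0 \<le> f t0"
    and antimono: "\<And>s u. t0 \<le> s \<Longrightarrow> s \<le> u \<Longrightarrow> f u \<le> f s"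
    and contracts: "\<And>s. t0 \<le> s \<Longrightarrow> f (s + N) \<le> c * f s"
    and "t0 \<le> t"
  shows "f t \<le> 1 / c * root N c ^ (t - t0) * f t0"
proof -
  define \<rho> where "\<rho> = root N c"
  have \<rho>: "0 \<le> \<rho>" "\<rho> \<le> 1" "\<rho> ^ N = c"
    unfolding \<rho>_def using assms(1-3) by (auto simp: real_root_pow_pos2)
  have periods: "f (t0 + q * N) \<le> c ^ q * f t0" for q
  proof (induction q)
    case (Suc q)
    have "f (t0 + Suc q * N) \<le> c * f (t0 + q * N)"
      using contracts[of "t0 + q * N"] by (simp add: ac_simps)
    also have "\<dots> \<le> c * (c ^ q * f t0)"
      using Suc.IH \<open>0 < c\<close> by simp
    finally show ?case by simp
  qed simp
  define q where "q = (t - t0) div N"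
  define m where "m = (t - t0) mod N"
  have t: "t - t0 = q * N + m" and "m \<le> N"
    unfolding q_def m_def using \<open>1 \<le> N\<close> by (simp_all add: less_imp_le)
  have "f t \<le> f (t0 + q * N)"
    using antimono t \<open>t0 \<le> t\<close> by simp
  also have "\<dots> \<le> c ^ q * f t0"
    by (rule periods)
  also have "\<dots> \<le> 1 / c * \<rho> ^ (t - t0) * f t0"
  proof (rule mult_right_mono[OF _ \<open>0 \<le> f t0\<close>])
    have "c ^ q * c \<le> c ^ q * \<rho> ^ m"
      using power_decreasing[OF \<open>m \<le> N\<close> \<rho>(1,2)] \<rho>(3) \<open>0 < c\<close> by simp
    also have "\<dots> = \<rho> ^ (t - t0)"
      unfolding t power_add mult.commute[of q N] power_mult \<rho>(3) ..
    finally show "c ^ q \<le> 1 / c * \<rho> ^ (t - t0)"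
      using \<open>0 < c\<close> by (simp add: field_simps)
  qed
  finally show ?thesis
    unfolding \<rho>_def .
qed

lemma exponential_consensus:
  fixes E :: "nat \<Rightarrow> ('n::finite \<times> 'n) set" and S :: "nat \<Rightarrow> 'n \<Rightarrow> 'n \<Rightarrow> real"
  assumes "1 \<le> r" "windows_strongly_connected E r" "0 < \<eta>"
  shows "\<exists>\<gamma> \<rho>. 0 < \<gamma> \<and> 0 \<le> \<rho> \<and> \<rho> < 1 \<and>
    (\<forall>t0 h. row_stochastic_flow S h t0 \<longrightarrow>
       (\<forall>t\<ge>t0. \<forall>i j. j = i \<or> (j, i) \<in> E t \<longrightarrow> \<eta> \<le> S t i j) \<longrightarrow>
       (\<forall>t\<ge>t0. seminorm_inf (h t) \<le> \<gamma> * \<rho> ^ (t - t0) * seminorm_inf (h t0)))"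
proof -
  define N where "N = r * (CARD('n) + 1)"
  define c where "c = 1 - 2 * min \<eta> (1 / 4) ^ N"
  have "1 \<le> N"
    using \<open>1 \<le> r\<close> by (simp add: N_def)
  then have "min \<eta> (1 / 4) ^ N \<le> min \<eta> (1 / 4)"
    using \<open>0 < \<eta>\<close> by (intro power_decreasing[of 1, simplified]) auto
  then have "0 < c" "c < 1"
    using \<open>0 < \<eta>\<close> unfolding c_def by auto
  have "seminorm_inf (h t) \<le> 1 / c * root N c ^ (t - t0) * seminorm_inf (h t0)"
    if flow: "row_stochastic_flow S h t0"
      and S_ge: "\<forall>t\<ge>t0. \<forall>i j. j = i \<or> (j, i) \<in> E t \<longrightarrow> \<eta> \<le> S t i j"
      and "t0 \<le> t"
    for t0 t h
  proof (rule exponential_decay_of_periodic_contraction[OF \<open>0 < c\<close> \<open>c < 1\<close> \<open>1 \<le> N\<close>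
        seminorm_inf_nonneg _ _ \<open>t0 \<le> t\<close>])
    show "seminorm_inf (h u) \<le> seminorm_inf (h s)" if "t0 \<le> s" "s \<le> u" for s u
      using row_stochastic_flow.seminorm_inf_antimono[OF row_stochastic_flow.start_later[OF flow]]
        that by blast
    show "seminorm_inf (h (s + N)) \<le> c * seminorm_inf (h s)" if "t0 \<le> s" for s
      unfolding c_def N_def
      by (rule row_stochastic_flow.seminorm_inf_window_contraction
          [OF row_stochastic_flow.start_later[OF flow that] assms(1,2)])
        (use S_ge that \<open>0 < \<eta>\<close> in \<open>auto intro!: min.coboundedI1\<close>)
  qed
  moreover have "0 \<le> root N c" "root N c < 1"
    using \<open>0 < c\<close> \<open>c < 1\<close> \<open>1 \<le> N\<close> by auto
  ultimately show ?thesis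
    using \<open>0 < c\<close> by (intro exI[of _ "1 / c"] exI[of _ "root N c"]) auto
qed

lemma S_mat_uniformly_positive:
  fixes E :: "nat \<Rightarrow> ('n::finite \<times> 'n) set"
  assumes "1 \<le> r" "windows_strongly_connected E r"
  shows "\<exists>\<eta>>0. \<forall>t\<ge>1. \<forall>i j. j = i \<or> (j, i) \<in> E t \<longrightarrow> \<eta> \<le> S_mat E t i j"
proof (intro exI conjI allI impI)
  have "0 < real CARD('n)"
    using finite_UNIV_card_ge_0[where 'a = 'n] by simp
  then show "0 < (1 / (1 + real CARD('n))) ^ (r * (CARD('n) + 1))
      / ((1 + real CARD('n)) * real CARD('n))"
    by simp
  show "(1 / (1 + real CARD('n))) ^ (r * (CARD('n) + 1)) / ((1 + real CARD('n)) * real CARD('n))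
      \<le> S_mat E t i j" if "1 \<le> t" "j = i \<or> (j, i) \<in> E t" for t i j
    using S_mat_ge[OF that(1) _ pushsum_v_lower_bound[OF assms that(1)]] that(2)
    by (simp add: in_nbrs_plus_iff)
qed

theorem lemma2:
  fixes E :: "nat \<Rightarrow> ('n::finite \<times> 'n) set"
  assumes "CARD('n) > 1"
    and "\<forall>t\<ge>1. \<exists>A. sym_stoch_compatible A (E t)"
    and "rjsc E"
  shows "\<exists>\<gamma> lam. \<gamma> > 0 \<and> 0 \<le> lam \<and> lam < 1 \<and>
    (\<forall>t0 \<ge> 1. \<forall>h :: nat \<Rightarrow> 'n \<Rightarrow> real.
       (\<forall>t\<ge>t0. \<forall>i. h (Suc t) i = (\<Sum>j\<in>UNIV. S_mat E t i j * h t j)) \<longrightarrow>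
       (\<forall>t\<ge>t0. seminorm_inf (h t) \<le> \<gamma> * lam ^ (t - t0) * seminorm_inf (h t0)))"
proof -
  obtain r where r: "1 \<le> r" "windows_strongly_connected E r"
    using assms(3) rjsc_iff_windows_strongly_connected by blast
  obtain \<eta> where "0 < \<eta>" and S_ge: "\<forall>t\<ge>1. \<forall>i j. j = i \<or> (j, i) \<in> E t \<longrightarrow> \<eta> \<le> S_mat E t i j"
    using S_mat_uniformly_positive[OF r] by blast
  obtain \<gamma> \<rho> where "0 < \<gamma>" "0 \<le> \<rho>" "\<rho> < 1" and decay:
    "\<And>t0 h. row_stochastic_flow (S_mat E) h t0 \<Longrightarrow>
       \<forall>t\<ge>t0. \<forall>i j. j = i \<or> (j, i) \<in> E t \<longrightarrow> \<eta> \<le> S_mat E t i j \<Longrightarrow>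
       \<forall>t\<ge>t0. seminorm_inf (h t) \<le> \<gamma> * \<rho> ^ (t - t0) * seminorm_inf (h t0)"
    using exponential_consensus[OF r \<open>0 < \<eta>\<close>, where S = "S_mat E"] by blast
  have "row_stochastic_flow (S_mat E) h t0"
    if "1 \<le> t0" "\<forall>t\<ge>t0. \<forall>i. h (Suc t) i = (\<Sum>j\<in>UNIV. S_mat E t i j * h t j)" for t0 h
    using that by unfold_locales (simp_all add: S_mat_nonneg sum_S_mat)
  with decay S_ge \<open>0 < \<gamma>\<close> \<open>0 \<le> \<rho>\<close> \<open>\<rho> < 1\<close> show ?thesis
    by (intro exI[of _ \<gamma>] exI[of _ \<rho>]) auto
qed

end
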